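(* For every $\varepsilon>0$ there is $\gamma>0$ such that for every $\eta>0$ there exists $\delta>0$ such that for all $n>1/\delta$ and all $\mu\in\mathcal P(\Omega^n)$ the following holds. If $\mu$ is $(\delta,2)$-symmetric, then every $(\gamma,2)$-state $S$ of $\mu$ with $\mu(S)\ge\eta$ satisfies $\frac1n\sum_{x\in[n]}\|\mu_{\downarrow x}[\cdot|S]-\mu_{\downarrow x}\|_{TV}<\varepsilon$.
   Context: $\Omega$ is a fixed finite nonempty set, $\mathcal P(\mathcal X)$ the set of probability measures on a finite set $\mathcal X$, $\|\cdot\|_{TV}$ total variation. For $\mu\in\mathcal P(\Omega^n)$ and $S\subset\Omega^n$ with $\mu(S)>0$, $\mu[\cdot|S]$ is the conditional measure; for $x_1,\dots,x_k\in[n]$, $\mu_{\downarrow\{x_1,\dots,x_k\}}[\cdot|S]$ denotes the joint law of $(\boldsymbol\sigma(x_1),\dots,\boldsymbol\sigma(x_k))$ for $\boldsymbol\sigma\sim\mu[\cdot|S]$, $\mu_{\downarrow x}[\cdot|S]$ the law of $\boldsymbol\sigma(x)$, and $\mu_{\downarrow x}$ the law of $\boldsymbol\sigma(x)$ under $\mu$. A set $S\subset\Omega^n$ is an $(\varepsilon,k)$-state of $\mu$ if $\mu(S)>0$ and $\frac1{n^k}\sum_{x_1,\dots,x_k\in[n]}\|\mu_{\downarrow\{x_1,\dots,x_k\}}[\cdot|S]-\mu_{\downarrow x_1}[\cdot|S]\otimes\cdots\otimes\mu_{\downarrow x_k}[\cdot|S]\|_{TV}<\varepsilon$. The measure $\mu$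 is $(\varepsilon,k)$-symmetric if $\Omega^n$ itself is an $(\varepsilon,k)$-state of $\mu$. *)

theory Defs
  imports "HOL-Analysis.Analysis"
begin

text \<open>Configurations in \<Omega>^n: functions on [n] = {0..<n}, extended by undefined.
  \<Omega> is a finite type 'a (nonempty as every HOL type).\<close>
definition cfgs :: "nat \<Rightarrow> (nat \<Rightarrow> 'a) set" where
  "cfgs n = PiE {0..<n} (\<lambda>_. UNIV)"

definition is_prob :: "nat \<Rightarrow> ((nat \<Rightarrow> 'a::finite) \<Rightarrow> real) \<Rightarrow> bool" where
  "is_prob n \<mu> \<longleftrightarrow> (\<forall>\<sigma>\<in>cfgs n. \<mu> \<sigma> \<ge> 0) \<and> (\<forall>\<sigma>. \<sigma> \<notin> cfgs n \<longrightarrow> \<mu> \<sigma> = 0)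
      \<and> (\<Sum>\<sigma>\<in>cfgs n. \<mu> \<sigma>) = 1"

definition mass :: "((nat \<Rightarrow> 'a) \<Rightarrow> real) \<Rightarrow> (nat \<Rightarrow> 'a) set \<Rightarrow> real" where
  "mass \<mu> S = (\<Sum>\<sigma>\<in>S. \<mu> \<sigma>)"

definition tv :: "('b::finite \<Rightarrow> real) \<Rightarrow> ('b \<Rightarrow> real) \<Rightarrow> real" where
  "tv p q = (\<Sum>z\<in>UNIV. \<bar>p z - q z\<bar>) / 2"

definition marg1 :: "((nat \<Rightarrow> 'a) \<Rightarrow> real) \<Rightarrow> (nat \<Rightarrow> 'a) set \<Rightarrow> nat \<Rightarrow> 'a \<Rightarrow> real" where
  "marg1 \<mu> S x = (\<lambda>a. mass \<mu> {\<sigma>\<in>S. \<sigma> x = a} / mass \<mu> S)"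

definition marg2 :: "((nat \<Rightarrow> 'a) \<Rightarrow> real) \<Rightarrow> (nat \<Rightarrow> 'a) set \<Rightarrow> nat \<Rightarrow> nat \<Rightarrow> 'a \<times> 'a \<Rightarrow> real" where
  "marg2 \<mu> S x y = (\<lambda>(a, b). mass \<mu> {\<sigma>\<in>S. \<sigma> x = a \<and> \<sigma> y = b} / mass \<mu> S)"

definition state2 :: "nat \<Rightarrow> ((nat \<Rightarrow> 'a::finite) \<Rightarrow> real) \<Rightarrow> real \<Rightarrow> (nat \<Rightarrow> 'a) set \<Rightarrow> bool" where
  "state2 n \<mu> \<epsilon> S \<longleftrightarrow> S \<subseteq> cfgs n \<and> mass \<mu> S > 0 \<and>
     (\<Sum>x\<in>{0..<n}. \<Sum>y\<in>{0..<n}.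
        tv (marg2 \<mu> S x y) (\<lambda>(a, b). marg1 \<mu> S x a * marg1 \<mu> S y b)) / real n ^ 2 < \<epsilon>"

definition symmetric2 :: "nat \<Rightarrow> ((nat \<Rightarrow> 'a::finite) \<Rightarrow> real) \<Rightarrow> real \<Rightarrow> bool" where
  "symmetric2 n \<mu> \<epsilon> \<longleftrightarrow> state2 n \<mu> \<epsilon> (cfgs n)"

end

theory Submission
  imports Defs
begin

(* Test the marginals against signs: for g_x = sgn (\<mu>_x[.|S] - \<mu>_x) and the centred statistic
   Y \<sigma> = \<Sum>_x (g_x (\<sigma> x) - E_\<mu> g_x), one has E_\<mu>[1_S Y] = 2 \<mu>(S) T, where T is the sum of
   total variation distances to be bounded, while E_\<mu>[Y^2] is a sum of covariances, each at most
   twice the distance of a pair marginal from the product of its marginals; hence E_\<mu>[Y^2] < 2 \<delta> n^2.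
   Cauchy-Schwarz, E_\<mu>[1_S Y]^2 \<le> \<mu>(S) E_\<mu>[Y^2], gives 2 \<eta> T^2 < \<delta> n^2, so \<delta> = \<eta> \<epsilon>^2 works. *)

lemma sum_mult_fibres:
  fixes f :: "'s \<Rightarrow> 'b::finite" and w :: "'s \<Rightarrow> real"
  assumes "finite S"
  shows "(\<Sum>\<sigma>\<in>S. w \<sigma> * h (f \<sigma>)) = (\<Sum>b\<in>UNIV. h b * sum w {\<sigma>\<in>S. f \<sigma> = b})"
proof -
  have "(\<Sum>\<sigma>\<in>S. w \<sigma> * h (f \<sigma>)) = (\<Sum>b\<in>UNIV. \<Sum>\<sigma>\<in>{\<sigma>\<in>S. f \<sigma> = b}. w \<sigma> * h (f \<sigma>))"
    using sum.group[OF assms, of UNIV f "\<lambda>\<sigma>. w \<sigma> * h (f \<sigma>)"] by simp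
  also have "\<dots> = (\<Sum>b\<in>UNIV. h b * sum w {\<sigma>\<in>S. f \<sigma> = b})"
    by (auto simp: sum_distrib_left mult.commute intro!: sum.cong)
  finally show ?thesis .
qed

lemma weighted_Cauchy_Schwarz:
  fixes w Y :: "'s \<Rightarrow> real"
  assumes "\<And>s. s \<in> S \<Longrightarrow> w s \<ge> 0"
  shows "(\<Sum>s\<in>S. w s * Y s)\<^sup>2 \<le> (\<Sum>s\<in>S. w s) * (\<Sum>s\<in>S. w s * (Y s)\<^sup>2)"
proof -
  have "(\<Sum>s\<in>S. w s * Y s) = (\<Sum>s\<in>S. sqrt (w s) * (sqrt (w s) * Y s))"
    using assms by (intro sum.cong) (auto simp flip: mult.assoc)
  also have "\<dots>\<^sup>2 \<le> (\<Sum>s\<in>S. (sqrt (w s))\<^sup>2) * (\<Sum>s\<in>S. (sqrt (w s) * Y s)\<^sup>2)"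
    by (rule Cauchy_Schwarz_ineq_sum)
  also have "\<dots> = (\<Sum>s\<in>S. w s) * (\<Sum>s\<in>S. w s * (Y s)\<^sup>2)"
    using assms by (simp add: power_mult_distrib)
  finally show ?thesis .
qed

lemma sum_mult_marg1:
  fixes \<mu> :: "(nat \<Rightarrow> 'a::finite) \<Rightarrow> real"
  assumes "finite S" "mass \<mu> S \<noteq> 0"
  shows "(\<Sum>\<sigma>\<in>S. \<mu> \<sigma> * h (\<sigma> x)) = mass \<mu> S * (\<Sum>a\<in>UNIV. h a * marg1 \<mu> S x a)"
  using sum_mult_fibres[OF assms(1), of \<mu> h "\<lambda>\<sigma>. \<sigma> x"] assms(2)
  by (simp add: marg1_def sum_distrib_left flip: mass_def)

lemma sum_mult_marg2:
  fixes \<mu> :: "(nat \<Rightarrow> 'a::finite) \<Rightarrow> real"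
  assumes "finite S" "mass \<mu> S \<noteq> 0"
  shows "(\<Sum>\<sigma>\<in>S. \<mu> \<sigma> * h (\<sigma> x, \<sigma> y)) = mass \<mu> S * (\<Sum>p\<in>UNIV. h p * marg2 \<mu> S x y p)"
  using sum_mult_fibres[OF assms(1), of \<mu> h "\<lambda>\<sigma>. (\<sigma> x, \<sigma> y)"] assms(2)
  by (simp add: marg2_def sum_distrib_left split_beta prod_eq_iff flip: mass_def)

lemma covariance_le_tv:
  fixes \<mu> :: "(nat \<Rightarrow> 'a::finite) \<Rightarrow> real" and g1 g2 :: "'a \<Rightarrow> real" and x y :: nat
  assumes C: "finite C" "mass \<mu> C = 1" and g: "\<And>a. \<bar>g1 a\<bar> \<le> 1" "\<And>a. \<bar>g2 a\<bar> \<le> 1"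
  defines "E1 \<equiv> \<Sum>\<sigma>\<in>C. \<mu> \<sigma> * g1 (\<sigma> x)" and "E2 \<equiv> \<Sum>\<sigma>\<in>C. \<mu> \<sigma> * g2 (\<sigma> y)"
  shows "(\<Sum>\<sigma>\<in>C. \<mu> \<sigma> * ((g1 (\<sigma> x) - E1) * (g2 (\<sigma> y) - E2)))
    \<le> 2 * tv (marg2 \<mu> C x y) (\<lambda>(a, b). marg1 \<mu> C x a * marg1 \<mu> C y b)"
proof -
  define P where "P = marg2 \<mu> C x y"
  define M where "M = (\<lambda>(a, b). marg1 \<mu> C x a * marg1 \<mu> C y b)"
  define G where "G = (\<lambda>(a, b). g1 a * g2 b)"
  have joint: "(\<Sum>\<sigma>\<in>C. \<mu> \<sigma> * (g1 (\<sigma> x) * g2 (\<sigma> y))) = (\<Sum>p\<in>UNIV. G p * P p)"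
    using sum_mult_marg2[OF C(1), of \<mu> G x y] C(2) by (simp add: G_def P_def)
  have product: "E1 * E2 = (\<Sum>p\<in>UNIV. G p * M p)"
    using sum_mult_marg1[OF C(1), of \<mu> g1 x] sum_mult_marg1[OF C(1), of \<mu> g2 y] C(2)
    by (simp add: E1_def E2_def G_def M_def sum_product sum.cartesian_product split_beta
        algebra_simps flip: UNIV_Times_UNIV)
  have "(\<Sum>\<sigma>\<in>C. \<mu> \<sigma> * ((g1 (\<sigma> x) - E1) * (g2 (\<sigma> y) - E2)))
      = (\<Sum>\<sigma>\<in>C. \<mu> \<sigma> * (g1 (\<sigma> x) * g2 (\<sigma> y))) - E2 * (\<Sum>\<sigma>\<in>C. \<mu> \<sigma> * g1 (\<sigma> x))
        - E1 * (\<Sum>\<sigma>\<in>C. \<mu> \<sigma> * g2 (\<sigma> y)) + E1 * E2 * mass \<mu> C"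
    by (simp add: mass_def algebra_simps sum.distrib sum_subtractf sum_distrib_left)
  also have "\<dots> = (\<Sum>\<sigma>\<in>C. \<mu> \<sigma> * (g1 (\<sigma> x) * g2 (\<sigma> y))) - E1 * E2"
    by (simp add: C(2) flip: E1_def E2_def)
  also have "\<dots> = (\<Sum>p\<in>UNIV. G p * (P p - M p))"
    by (simp add: joint product algebra_simps sum_subtractf)
  also have "\<dots> \<le> (\<Sum>p\<in>UNIV. \<bar>P p - M p\<bar>)"
  proof (rule sum_mono)
    fix p :: "'a \<times> 'a"
    have "\<bar>G p\<bar> \<le> 1"
      using g by (auto simp: G_def abs_mult split: prod.split intro: mult_le_one)
    then have "\<bar>G p * (P p - M p)\<bar> \<le> \<bar>P p - M p\<bar>"
      by (simp add: abs_mult mult_left_le_one_le)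
    then show "G p * (P p - M p) \<le> \<bar>P p - M p\<bar>" by linarith
  qed
  also have "\<dots> = 2 * tv P M" by (simp add: tv_def)
  finally show ?thesis by (simp add: P_def M_def)
qed

lemma sum_centered_sign_eq_tv:
  fixes \<mu> :: "(nat \<Rightarrow> 'a::finite) \<Rightarrow> real" and x :: nat
  assumes C: "finite C" "mass \<mu> C = 1" and S: "S \<subseteq> C" "mass \<mu> S \<noteq> 0"
  defines "g \<equiv> \<lambda>a. sgn (marg1 \<mu> S x a - marg1 \<mu> C x a)"
  shows "(\<Sum>\<sigma>\<in>S. \<mu> \<sigma> * (g (\<sigma> x) - (\<Sum>\<tau>\<in>C. \<mu> \<tau> * g (\<tau> x))))
    = 2 * mass \<mu> S * tv (marg1 \<mu> S x) (marg1 \<mu> C x)"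
proof -
  have "finite S" using C(1) S(1) by (rule finite_subset[rotated])
  have "(\<Sum>\<sigma>\<in>S. \<mu> \<sigma> * (g (\<sigma> x) - (\<Sum>\<tau>\<in>C. \<mu> \<tau> * g (\<tau> x))))
      = (\<Sum>\<sigma>\<in>S. \<mu> \<sigma> * g (\<sigma> x)) - mass \<mu> S * (\<Sum>\<tau>\<in>C. \<mu> \<tau> * g (\<tau> x))"
    by (simp add: mass_def algebra_simps sum_subtractf sum_distrib_right)
  also have "\<dots> = mass \<mu> S * (\<Sum>a\<in>UNIV. g a * (marg1 \<mu> S x a - marg1 \<mu> C x a))"
    using sum_mult_marg1[OF \<open>finite S\<close> S(2)] sum_mult_marg1[OF C(1)] C(2)
    by (simp add: algebra_simps sum_subtractf)
  also have "\<dots> = mass \<mu> S * (\<Sum>a\<in>UNIV. \<bar>marg1 \<mu> S x a - marg1 \<mu> C x a\<bar>)"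
    by (simp add: g_def abs_sgn mult.commute)
  finally show ?thesis by (simp add: tv_def)
qed

lemma sum_sq_centered_le_pair_tv:
  fixes \<mu> :: "(nat \<Rightarrow> 'a::finite) \<Rightarrow> real" and g :: "nat \<Rightarrow> 'a \<Rightarrow> real"
  assumes C: "finite C" "mass \<mu> C = 1" and g: "\<And>x a. \<bar>g x a\<bar> \<le> 1"
  defines "Z \<equiv> \<lambda>x \<sigma>. g x (\<sigma> x) - (\<Sum>\<tau>\<in>C. \<mu> \<tau> * g x (\<tau> x))"
  shows "(\<Sum>\<sigma>\<in>C. \<mu> \<sigma> * (\<Sum>x\<in>I. Z x \<sigma>)\<^sup>2)
    \<le> 2 * (\<Sum>x\<in>I. \<Sum>y\<in>I. tv (marg2 \<mu> C x y) (\<lambda>(a, b). marg1 \<mu> C x a * marg1 \<mu> C y b))"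
proof -
  have "(\<Sum>\<sigma>\<in>C. \<mu> \<sigma> * (\<Sum>x\<in>I. Z x \<sigma>)\<^sup>2) = (\<Sum>\<sigma>\<in>C. \<Sum>x\<in>I. \<Sum>y\<in>I. \<mu> \<sigma> * (Z x \<sigma> * Z y \<sigma>))"
    unfolding power2_eq_square sum_product by (simp add: sum_distrib_left)
  also have "\<dots> = (\<Sum>x\<in>I. \<Sum>y\<in>I. \<Sum>\<sigma>\<in>C. \<mu> \<sigma> * (Z x \<sigma> * Z y \<sigma>))"
    by (simp only: sum.swap[of _ C])
  also have "\<dots> \<le> (\<Sum>x\<in>I. \<Sum>y\<in>I.
      2 * tv (marg2 \<mu> C x y) (\<lambda>(a, b). marg1 \<mu> C x a * marg1 \<mu> C y b))"
    unfolding Z_def by (intro sum_mono covariance_le_tv C g)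
  finally show ?thesis by (simp add: sum_distrib_left)
qed

definition marginal_shift :: "nat \<Rightarrow> ((nat \<Rightarrow> 'a::finite) \<Rightarrow> real) \<Rightarrow> (nat \<Rightarrow> 'a) set \<Rightarrow> real" where
  "marginal_shift n \<mu> S = (\<Sum>x\<in>{0..<n}. tv (marg1 \<mu> S x) (marg1 \<mu> (cfgs n) x))"

definition pair_correlation :: "nat \<Rightarrow> ((nat \<Rightarrow> 'a::finite) \<Rightarrow> real) \<Rightarrow> (nat \<Rightarrow> 'a) set \<Rightarrow> real" where
  "pair_correlation n \<mu> S = (\<Sum>x\<in>{0..<n}. \<Sum>y\<in>{0..<n}.
     tv (marg2 \<mu> S x y) (\<lambda>(a, b). marg1 \<mu> S x a * marg1 \<mu> S y b))"

lemma state2_iff_pair_correlation: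
  "state2 n \<mu> \<epsilon> S \<longleftrightarrow> S \<subseteq> cfgs n \<and> mass \<mu> S > 0 \<and> pair_correlation n \<mu> S / real n ^ 2 < \<epsilon>"
  by (simp add: state2_def pair_correlation_def)

lemma mass_mult_marginal_shift_sq_le:
  fixes \<mu> :: "(nat \<Rightarrow> 'a::finite) \<Rightarrow> real"
  assumes \<mu>: "is_prob n \<mu>" and S: "S \<subseteq> cfgs n" "mass \<mu> S > 0"
  shows "2 * mass \<mu> S * (marginal_shift n \<mu> S)\<^sup>2 \<le> pair_correlation n \<mu> (cfgs n)"
proof -
  define C where "C = (cfgs n :: (nat \<Rightarrow> 'a) set)"
  define m where "m = mass \<mu> S"
  define T where "T = marginal_shift n \<mu> S"
  have C: "finite C" "mass \<mu> C = 1" and nonneg: "\<And>\<sigma>. \<sigma> \<in> C \<Longrightarrow> \<mu> \<sigma> \<ge> 0"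
    using \<mu> by (auto simp: C_def cfgs_def is_prob_def mass_def finite_PiE)
  have "S \<subseteq> C" using S(1) by (simp add: C_def)
  define g where "g x a = sgn (marg1 \<mu> S x a - marg1 \<mu> C x a)" for x a
  define Y where "Y \<sigma> = (\<Sum>x\<in>{0..<n}. g x (\<sigma> x) - (\<Sum>\<tau>\<in>C. \<mu> \<tau> * g x (\<tau> x)))" for \<sigma>
  have "(\<Sum>\<sigma>\<in>S. \<mu> \<sigma> * Y \<sigma>)
      = (\<Sum>x\<in>{0..<n}. \<Sum>\<sigma>\<in>S. \<mu> \<sigma> * (g x (\<sigma> x) - (\<Sum>\<tau>\<in>C. \<mu> \<tau> * g x (\<tau> x))))"
    unfolding Y_def sum_distrib_left by (rule sum.swap)
  also have "\<dots> = (\<Sum>x\<in>{0..<n}. 2 * m * tv (marg1 \<mu> S x) (marg1 \<mu> C x))"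
    using sum_centered_sign_eq_tv[OF C \<open>S \<subseteq> C\<close>] S(2) by (simp add: g_def m_def)
  finally have first_moment: "(\<Sum>\<sigma>\<in>S. \<mu> \<sigma> * Y \<sigma>) = 2 * m * T"
    by (simp add: T_def marginal_shift_def C_def sum_distrib_left)
  have second_moment: "(\<Sum>\<sigma>\<in>C. \<mu> \<sigma> * (Y \<sigma>)\<^sup>2) \<le> 2 * pair_correlation n \<mu> C"
    using sum_sq_centered_le_pair_tv[OF C, of g "{0..<n}"]
    by (simp add: Y_def pair_correlation_def g_def abs_sgn_eq)
  \<comment> \<open>the left-hand side is (2 m T)^2, with the factor m that cancels at the end pulled out\<close>
  have "m * (2 * (2 * m * T\<^sup>2)) = (\<Sum>\<sigma>\<in>S. \<mu> \<sigma> * Y \<sigma>)\<^sup>2"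
    by (simp add: first_moment power2_eq_square)
  also have "\<dots> \<le> m * (\<Sum>\<sigma>\<in>S. \<mu> \<sigma> * (Y \<sigma>)\<^sup>2)"
    using weighted_Cauchy_Schwarz[of S \<mu> Y] nonneg \<open>S \<subseteq> C\<close> by (auto simp: m_def mass_def)
  also have "\<dots> \<le> m * (\<Sum>\<sigma>\<in>C. \<mu> \<sigma> * (Y \<sigma>)\<^sup>2)"
    using S(2) C(1) nonneg \<open>S \<subseteq> C\<close> by (intro mult_left_mono sum_mono2) (auto simp: m_def)
  also have "\<dots> \<le> m * (2 * pair_correlation n \<mu> C)"
    using second_moment S(2) by (simp add: m_def)
  finally show ?thesis
    using S(2) by (simp add: m_def T_def C_def mult_left_le_imp_le)
qed

lemma marginal_exists_delta:
  fixes \<mu> :: "(nat \<Rightarrow> 'a::finite) \<Rightarrow> real"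
  assumes "\<epsilon> > 0" "\<eta> > 0" "real n > 1 / (\<eta> * \<epsilon>\<^sup>2)" "is_prob n \<mu>" "symmetric2 n \<mu> (\<eta> * \<epsilon>\<^sup>2)"
    and S: "S \<subseteq> cfgs n" "mass \<mu> S \<ge> \<eta>"
  shows "marginal_shift n \<mu> S / n < \<epsilon>"
proof -
  define T where "T = marginal_shift n \<mu> S"
  have "1 / (\<eta> * \<epsilon>\<^sup>2) > 0"
    using \<open>\<epsilon> > 0\<close> \<open>\<eta> > 0\<close> by simp
  then have "real n > 0"
    using \<open>real n > 1 / (\<eta> * \<epsilon>\<^sup>2)\<close> by (rule order.strict_trans)
  have "\<eta> * T\<^sup>2 \<le> 2 * mass \<mu> S * T\<^sup>2"
    using S(2) \<open>\<eta> > 0\<close> by (intro mult_right_mono) auto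
  also have "\<dots> \<le> pair_correlation n \<mu> (cfgs n)"
    unfolding T_def using S \<open>\<eta> > 0\<close> by (intro mass_mult_marginal_shift_sq_le \<open>is_prob n \<mu>\<close>) auto
  also have "\<dots> < \<eta> * (\<epsilon> * n)\<^sup>2"
    using \<open>symmetric2 n \<mu> (\<eta> * \<epsilon>\<^sup>2)\<close> \<open>real n > 0\<close>
    by (simp add: symmetric2_def state2_iff_pair_correlation divide_less_eq power_mult_distrib)
  finally have "T < \<epsilon> * n"
    using \<open>\<eta> > 0\<close> \<open>\<epsilon> > 0\<close> by (simp add: power2_less_imp_less)
  then show ?thesis
    using \<open>real n > 0\<close> by (simp add: T_def divide_less_eq mult.commute)
qed

theorem corollary2p4:
  shows "\<forall>\<epsilon>>0. \<exists>\<gamma>>0. \<forall>\<eta>>0. \<exists>\<delta>>0. \<forall>(n::nat) (\<mu> :: (nat \<Rightarrow> 'a::finite) \<Rightarrow> real).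
     real n > 1 / \<delta> \<longrightarrow> is_prob n \<mu> \<longrightarrow> symmetric2 n \<mu> \<delta> \<longrightarrow>
     (\<forall>S. state2 n \<mu> \<gamma> S \<longrightarrow> mass \<mu> S \<ge> \<eta> \<longrightarrow>
        (\<Sum>x\<in>{0..<n}. tv (marg1 \<mu> S x) (marg1 \<mu> (cfgs n) x)) / real n < \<epsilon>)"
proof -
  have exists_delta: "\<exists>\<delta>>0. \<forall>n (\<mu> :: (nat \<Rightarrow> 'a) \<Rightarrow> real). real n > 1 / \<delta> \<longrightarrow> is_prob n \<mu> \<longrightarrow>
      symmetric2 n \<mu> \<delta> \<longrightarrow> (\<forall>S. state2 n \<mu> \<gamma> S \<longrightarrow> mass \<mu> S \<ge> \<eta> \<longrightarrow>
      (\<Sum>x\<in>{0..<n}. tv (marg1 \<mu> S x) (marg1 \<mu> (cfgs n) x)) / real n < \<epsilon>)"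
    if "\<epsilon> > 0" "\<eta> > 0" for \<epsilon> \<eta> \<gamma> :: real
    using that marginal_exists_delta[OF that]
    by (intro exI[of _ "\<eta> * \<epsilon>\<^sup>2"] conjI allI impI) (auto simp: state2_def marginal_shift_def)
  show ?thesis
    by (intro allI impI exI[of _ "1::real"] conjI zero_less_one exists_delta)
qed

end
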